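(* Let $\mathcal{M}$ be a matroid of rank $c$ on $[n]$ and order $G(J(\mathcal{M}))$ by the iterated-contraction order $\preceq$ along an ordered basis $(v_1,\ldots,v_c)$ (see context). Let $N\in G(J(\mathcal{M}))$, $N\neq\min G(J(\mathcal{M}))$. Then $$C_N=\begin{cases}J(\mathcal{M}(\gamma_N)^0), & \text{if } i_N=0,\\ J(\mathcal{M}'(\gamma_N)^0), & \text{if } i_N>0,\ \text{where }\mathcal{M}'=\mathcal{M}/\{v_1,\ldots,v_{i_N}\}.\end{cases}$$ Moreover, for any given $N$ one can choose such an ordering with $i_N=0$.
   Context: $R=\mathbb{K}[x_1,\ldots,x_n]$, $\mathbb{K}$ a field. For a matroid $\mathcal{N}$ on $E\subseteq[n]$, $J(\mathcal{N})=\bigcap_{F\in\mathcal{B}(\mathcal{N})}(x_i:i\in F)$, formed in $\mathbb{K}[x_i:i\in E]$ and extended to $R$. $\mathcal{M}/A$ is contraction by an independent set $A$. $G(\cdot)$ is the set of minimal monomial generators. For a monomial $N=\prod x_i^{a_i}$, $\gamma_N(i)=a_i$ and $\operatorname{supp}\gamma_N=\{i:a_i>0\}$. For a matroid $\mathcal{N}$ and $N\in G(J(\mathcal{N}))$ ($\gamma_N$ is then a basic $1$-cover of $\mathcal{N}$), $\mathcal{N}(\gamma_N)$ is the matroid whose bases are the bases $F$ of $\mathcal{N}$ with $\sum_{i\in F}\gamma_N(i)=1$, and $\mathcal{N}(\gamma_N)^0$ is its restriction to the complement of $\operatorname{supp}\gamma_N$. Order: $J_i=J(\mathcal{M}/\{v_1,\ldots,v_i\})$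 for $0\le i\le c$; one has $G(J_c)\subseteq\cdots\subseteq G(J_0)$. Choose any total order on each $G(J_i)-G(J_{i+1})$; for $N\in G(J)$ let $i_N$ be the index with $N\in G(J_i)-G(J_{i+1})$; set $N\prec N'$ iff $i_N>i_{N'}$, or $i_N=i_{N'}$ and $N$ precedes $N'$ in the chosen order. $C_N=(N'\in G(J):N'\prec N):N$. *)

theory Defs
  imports Main
begin

text \<open>Monomials of R = K[x_1..x_n] are encoded by exponent vectors nat => nat,
 supported in {1..n}. All ideals occurring are monomial ideals, which are
 determined by the set of monomials they contain; an ideal is encoded by that set.\<close>

type_synonym mono = "nat \<Rightarrow> nat"

definition monoms :: "nat \<Rightarrow> mono set" where
  "monoms n = {a. \<forall>i. a i \<noteq> 0 \<longrightarrow> i \<in> {1..n}}"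

definition is_matroid :: "nat set \<Rightarrow> nat set set \<Rightarrow> bool" where
  "is_matroid E B \<longleftrightarrow> finite E \<and> B \<noteq> {} \<and> (\<forall>F\<in>B. F \<subseteq> E) \<and>
     (\<forall>F1\<in>B. \<forall>F2\<in>B. \<forall>x\<in>F1 - F2. \<exists>y\<in>F2 - F1. insert y (F1 - {x}) \<in> B)"

text \<open>Monomials of the prime ideal (x_i : i in F).\<close>
definition var_ideal :: "nat \<Rightarrow> nat set \<Rightarrow> mono set" where
  "var_ideal n F = {a \<in> monoms n. \<exists>i\<in>F. 0 < a i}"

definition J :: "nat \<Rightarrow> nat set set \<Rightarrow> mono set" where
  "J n B = {a \<in> monoms n. \<forall>F\<in>B. a \<in> var_ideal n F}"

text \<open>Minimal monomial generators (divisibility = pointwise order).\<close>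
definition mingens :: "mono set \<Rightarrow> mono set" where
  "mingens I = {m \<in> I. \<forall>m'\<in>I. m' \<le> m \<longrightarrow> m' = m}"

text \<open>Bases of the contraction by an independent set A.\<close>
definition contract :: "nat set set \<Rightarrow> nat set \<Rightarrow> nat set set" where
  "contract B A = {F - A | F. F \<in> B \<and> A \<subseteq> F}"

definition restrict :: "nat set set \<Rightarrow> nat set \<Rightarrow> nat set set" where
  "restrict B S = {X \<in> (\<lambda>F. F \<inter> S) ` B. \<forall>Y \<in> (\<lambda>F. F \<inter> S) ` B. X \<subseteq> Y \<longrightarrow> X = Y}"

definition cover_matroid :: "nat set set \<Rightarrow> mono \<Rightarrow> nat set set" where
  "cover_matroid B g = {F \<in> B. (\<Sum>i\<in>F. g i) = 1}"

definition cover_matroid0 :: "nat set \<Rightarrow> nat set set \<Rightarrow> mono \<Rightarrow> nat set set" where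
  "cover_matroid0 E B g = restrict (cover_matroid B g) (E - {i. g i \<noteq> 0})"

definition Jseq :: "nat \<Rightarrow> nat set set \<Rightarrow> nat list \<Rightarrow> nat \<Rightarrow> mono set" where
  "Jseq n B vs i = J n (contract B (set (take i vs)))"

definition level :: "nat \<Rightarrow> nat set set \<Rightarrow> nat list \<Rightarrow> nat \<Rightarrow> mono set" where
  "level n B vs i = mingens (Jseq n B vs i) -
     (if i < length vs then mingens (Jseq n B vs (Suc i)) else {})"

definition level_index :: "nat \<Rightarrow> nat set set \<Rightarrow> nat list \<Rightarrow> mono \<Rightarrow> nat" where
  "level_index n B vs N = (THE i. i \<le> length vs \<and> N \<in> level n B vs i)"

text \<open>The order: r i is the chosen strict total order on level i.\<close>
definition prec :: "nat \<Rightarrow> nat set set \<Rightarrow> nat list \<Rightarrow> (nat \<Rightarrow> mono rel) \<Rightarrow> mono \<Rightarrow> mono \<Rightarrow> bool" where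
  "prec n B vs r N N' \<longleftrightarrow> level_index n B vs N > level_index n B vs N' \<or>
     (level_index n B vs N = level_index n B vs N' \<and> (N, N') \<in> r (level_index n B vs N))"

text \<open>C_N = (N' in G(J) : N' prec N) : N, as a set of monomials.\<close>
definition colon_prec :: "nat \<Rightarrow> nat set set \<Rightarrow> nat list \<Rightarrow> (nat \<Rightarrow> mono rel) \<Rightarrow> mono \<Rightarrow> mono set" where
  "colon_prec n B vs r N = {m \<in> monoms n. \<exists>N'\<in>mingens (J n B). prec n B vs r N' N \<and> N' \<le> (\<lambda>i. m i + N i)}"

end

theory Submission
  imports Defs
begin

text \<open>The minimal generators of J(M) are the indicator vectors of the cocircuits of M, and those
  of J(M/A), for A independent, are exactly the generators of J(M) vanishing on A. Hence N lies on
  level i iff it vanishes on v_1, ..., v_i but not on v_(i+1); so, with M' = M/{v_1, ..., v_i},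
  every generator preceding N is a generator D \<noteq> N of J(M'), and every generator of
  J(M'/v_(i+1)) precedes N.
  Let F be a basis of M' on which N has weight 1, say at e. If m misses F - supp N, then such a D
  dividing m N meets F at most in e, so D and N would both be the fundamental cocircuit of e with
  respect to F. Conversely, if m meets all these sets, then m N with x_(v_(i+1)) removed lies in
  J(M'/v_(i+1)). As the bases of M' have equal size, restricting M'(gamma_N) to the complement of
  supp N just removes e from each of its bases. Finally, i_N = 0 as soon as v_1 lies in supp N.\<close>

lemma mem_J_iff: "m \<in> J n B \<longleftrightarrow> m \<in> monoms n \<and> (\<forall>F\<in>B. \<exists>i\<in>F. 0 < m i)"
  by (auto simp: J_def var_ideal_def)

lemma mingensD:
  "m \<in> mingens I \<Longrightarrow> m \<in> I"
  "m \<in> mingens I \<Longrightarrow> m' \<in> I \<Longrightarrow> m' \<le> m \<Longrightarrow> m' = m"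
  by (auto simp: mingens_def)

lemma mingensI: "m \<in> I \<Longrightarrow> (\<And>m'. m' \<in> I \<Longrightarrow> m' \<le> m \<Longrightarrow> m' = m) \<Longrightarrow> m \<in> mingens I"
  by (auto simp: mingens_def)

lemma ex_mingens_le:
  assumes "a \<in> I" "I \<subseteq> monoms n"
  obtains m where "m \<in> mingens I" "m \<le> a"
proof -
  let ?deg = "\<lambda>b. \<Sum>i\<in>{1..n}. b i"
  obtain b where b: "b \<in> I" "b \<le> a"
    and least: "\<And>b'. b' \<in> I \<and> b' \<le> a \<Longrightarrow> ?deg b \<le> ?deg b'"
    using ex_has_least_nat[of "\<lambda>b. b \<in> I \<and> b \<le> a" a ?deg] assms(1) by auto
  have "b \<in> mingens I"
  proof (rule mingensI)
    fix b' assume b': "b' \<in> I" "b' \<le> b"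
    have "b' i = b i" for i
    proof (cases "i \<in> {1..n}")
      case True
      have "?deg b' \<le> ?deg b" using b'(2) by (intro sum_mono) (simp add: le_fun_def)
      moreover have "b' \<le> a" using b'(2) b(2) by (rule order_trans)
      then have "?deg b \<le> ?deg b'" using least b'(1) by blast
      ultimately have "?deg b' = ?deg b" by (rule antisym)
      then show ?thesis
        using sum_mono_inv[of b' "{1..n}" b i] True b'(2) by (simp add: le_funD)
    next
      case False
      have "b' \<in> monoms n" "b \<in> monoms n" using assms(2) b'(1) b(1) by auto
      then have "b' i = 0" "b i = 0" using False unfolding monoms_def by blast+
      then show ?thesis by simp
    qed
    then show "b' = b" by blast
  qed (fact b(1))
  then show thesis using b(2) by (rule that)
qed

lemma mingens_J_le_1:
  assumes "m \<in> mingens (J n B)"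
  shows "m i \<le> 1"
proof -
  have "(\<lambda>i. min (m i) 1) \<in> J n B"
    using mingensD(1)[OF assms] by (auto simp: mem_J_iff monoms_def)
  then have "(\<lambda>i. min (m i) 1) = m" by (rule mingensD(2)[OF assms]) (simp add: le_fun_def)
  then show ?thesis by (metis min.cobounded2)
qed

lemma mingens_J_vanish:
  assumes "m \<in> mingens (J n B)" "\<forall>F\<in>B. x \<notin> F"
  shows "m x = 0"
proof -
  have "m(x := 0) \<in> J n B"
    using mingensD(1)[OF assms(1)] assms(2) by (auto simp: mem_J_iff monoms_def) metis
  then have "m(x := 0) = m" by (rule mingensD(2)[OF assms(1)]) (simp add: le_fun_def)
  then show ?thesis by (metis fun_upd_same)
qed

lemma bases_finite:
  fixes B :: "nat set set"
  assumes "\<forall>F\<in>B. F \<subseteq> {1..n}"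
  shows "\<forall>F\<in>B. finite F"
proof
  fix F assume "F \<in> B"
  then have "F \<subseteq> {1..n}" using assms by blast
  then show "finite F" by (rule finite_subset) (rule finite_atLeastAtMost)
qed

definition basis_exchange :: "nat set set \<Rightarrow> bool" where
  "basis_exchange B \<longleftrightarrow>
     (\<forall>F1\<in>B. \<forall>F2\<in>B. \<forall>x\<in>F1 - F2. \<exists>y\<in>F2 - F1. insert y (F1 - {x}) \<in> B)"

lemma basis_exchange_if_is_matroid: "is_matroid E B \<Longrightarrow> basis_exchange B"
  by (simp add: is_matroid_def basis_exchange_def)

lemma basis_exchangeE:
  assumes "basis_exchange B" "F1 \<in> B" "F2 \<in> B" "x \<in> F1" "x \<notin> F2"
  obtains y where "y \<in> F2" "y \<notin> F1" "insert y (F1 - {x}) \<in> B"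
  using assms unfolding basis_exchange_def by blast

lemma contract_empty [simp]: "contract B {} = B"
  by (auto simp: contract_def)

lemma contract_insert: "v \<notin> A \<Longrightarrow> contract B (insert v A) = contract (contract B A) {v}"
  unfolding contract_def by auto

lemma basis_exchange_contract:
  assumes "basis_exchange B"
  shows "basis_exchange (contract B A)"
  unfolding basis_exchange_def
proof (intro ballI)
  fix G1 G2 x assume G1: "G1 \<in> contract B A" and G2: "G2 \<in> contract B A" and x: "x \<in> G1 - G2"
  obtain F1 where F1: "F1 \<in> B" "A \<subseteq> F1" "G1 = F1 - A" using G1 by (auto simp: contract_def)
  obtain F2 where F2: "F2 \<in> B" "A \<subseteq> F2" "G2 = F2 - A" using G2 by (auto simp: contract_def)
  obtain y where y: "y \<in> F2" "y \<notin> F1" "insert y (F1 - {x}) \<in> B"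
    using basis_exchangeE[OF assms F1(1) F2(1)] x F1 F2 by blast
  have "insert y (G1 - {x}) = insert y (F1 - {x}) - A" "A \<subseteq> insert y (F1 - {x})"
    using F1 x y by auto
  then have "insert y (G1 - {x}) \<in> contract B A" using y(3) by (auto simp: contract_def)
  moreover have "y \<in> G2 - G1" using y F1 F2 by auto
  ultimately show "\<exists>y\<in>G2 - G1. insert y (G1 - {x}) \<in> contract B A" by blast
qed

lemma ex_basis_between:
  assumes "basis_exchange B" "\<forall>F\<in>B. finite F" "H \<in> B" "A \<subseteq> H" "P \<in> B" "insert v A \<subseteq> P"
  shows "\<exists>G\<in>B. insert v A \<subseteq> G \<and> G - {v} \<subseteq> H"
  using assms(5,6)
proof (induction "card (P - H)" arbitrary: P rule: less_induct)
  case less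
  show ?case
  proof (cases "P - {v} \<subseteq> H")
    case True
    then show ?thesis using less.prems by blast
  next
    case False
    then obtain x where x: "x \<in> P" "x \<notin> H" "x \<noteq> v" by auto
    obtain y where y: "y \<in> H" "y \<notin> P" "insert y (P - {x}) \<in> B"
      using basis_exchangeE[OF assms(1) less.prems(1) assms(3) x(1,2)] by blast
    have "insert y (P - {x}) - H = (P - H) - {x}" using y by auto
    then have "card (insert y (P - {x}) - H) < card (P - H)"
      using assms(2) less.prems(1) x by (metis DiffI card_Diff1_less finite_Diff)
    moreover have "insert v A \<subseteq> insert y (P - {x})" using less.prems(2) x assms(4) by auto
    ultimately show ?thesis using less.hyps y(3) by blast
  qed
qed

lemma J_contract_insert_iff:
  assumes "basis_exchange B" "\<forall>F\<in>B. finite F" "P \<in> B" "insert v A \<subseteq> P" "w v = 0"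
  shows "w \<in> J n (contract B (insert v A)) \<longleftrightarrow> w \<in> J n (contract B A)"
proof
  assume w: "w \<in> J n (contract B (insert v A))"
  show "w \<in> J n (contract B A)"
    unfolding mem_J_iff
  proof (intro conjI ballI)
    show "w \<in> monoms n" using w by (simp add: mem_J_iff)
    fix G assume "G \<in> contract B A"
    then obtain H where H: "H \<in> B" "A \<subseteq> H" "G = H - A" by (auto simp: contract_def)
    obtain G' where G': "G' \<in> B" "insert v A \<subseteq> G'" "G' - {v} \<subseteq> H"
      using ex_basis_between[OF assms(1,2) H(1,2) assms(3,4)] by blast
    then have "G' - insert v A \<in> contract B (insert v A)" by (auto simp: contract_def)
    then obtain z where "z \<in> G' - insert v A" "0 < w z" using w unfolding mem_J_iff by blast
    then show "\<exists>i\<in>G. 0 < w i" using G' H by auto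
  qed
next
  assume w: "w \<in> J n (contract B A)"
  show "w \<in> J n (contract B (insert v A))"
    unfolding mem_J_iff
  proof (intro conjI ballI)
    show "w \<in> monoms n" using w by (simp add: mem_J_iff)
    fix G assume "G \<in> contract B (insert v A)"
    then obtain H where H: "H \<in> B" "insert v A \<subseteq> H" "G = H - insert v A"
      by (auto simp: contract_def)
    then have "H - A \<in> contract B A" by (auto simp: contract_def)
    then obtain z where "z \<in> H - A" "0 < w z" using w by (auto simp: mem_J_iff)
    then show "\<exists>i\<in>G. 0 < w i" using H assms(5) by (intro bexI[of _ z]) auto
  qed
qed

lemma mingens_J_contract_insert_iff:
  assumes "basis_exchange B" "\<forall>F\<in>B. finite F" "P \<in> B" "insert v A \<subseteq> P"
  shows "D \<in> mingens (J n (contract B (insert v A))) \<longleftrightarrow>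
    D \<in> mingens (J n (contract B A)) \<and> D v = 0"
proof -
  have J_iff: "w \<in> J n (contract B (insert v A)) \<longleftrightarrow> w \<in> J n (contract B A)"
    if "w \<le> D" "D v = 0" for w
    using J_contract_insert_iff[OF assms] that by (metis le_funD le_zero_eq)
  show ?thesis
  proof
    assume D: "D \<in> mingens (J n (contract B (insert v A)))"
    have "D v = 0" using D by (rule mingens_J_vanish) (auto simp: contract_def)
    with D J_iff show "D \<in> mingens (J n (contract B A)) \<and> D v = 0"
      by (auto simp: mingens_def)
  next
    assume "D \<in> mingens (J n (contract B A)) \<and> D v = 0"
    with J_iff show "D \<in> mingens (J n (contract B (insert v A)))"
      by (auto simp: mingens_def)
  qed
qed

lemma mingens_J_contract:
  assumes "basis_exchange B" "\<forall>F\<in>B. finite F" "P \<in> B" "A \<subseteq> P"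
  shows "mingens (J n (contract B A)) = {D \<in> mingens (J n B). \<forall>x\<in>A. D x = 0}"
proof -
  have "finite A" using assms(2-4) finite_subset by blast
  then show ?thesis using assms(4)
  proof (induction A rule: finite_induct)
    case empty
    then show ?case by simp
  next
    case (insert v A)
    then show ?case using mingens_J_contract_insert_iff[OF assms(1-3) insert.prems] by auto
  qed
qed

definition fundamental_cocircuit :: "nat set set \<Rightarrow> nat set \<Rightarrow> nat \<Rightarrow> mono" where
  "fundamental_cocircuit B F e x = (if insert x (F - {e}) \<in> B then 1 else 0)"

lemma fundamental_cocircuit_mem_J:
  assumes "basis_exchange B" "\<forall>F\<in>B. F \<subseteq> {1..n}" "F \<in> B" "e \<in> F"
  shows "fundamental_cocircuit B F e \<in> J n B"
  unfolding mem_J_iff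
proof (intro conjI ballI)
  show "fundamental_cocircuit B F e \<in> monoms n"
    using assms(2) by (auto simp: monoms_def fundamental_cocircuit_def simp del: atLeastAtMost_iff)
  fix H assume H: "H \<in> B"
  show "\<exists>x\<in>H. 0 < fundamental_cocircuit B F e x"
  proof (cases "e \<in> H")
    case True
    moreover have "insert e (F - {e}) \<in> B" using assms(3,4) by (simp add: insert_absorb)
    ultimately show ?thesis unfolding fundamental_cocircuit_def by (intro bexI[of _ e]) simp_all
  next
    case False
    obtain y where "y \<in> H" "insert y (F - {e}) \<in> B"
      using basis_exchangeE[OF assms(1,3) H assms(4) False] by blast
    then show ?thesis by (auto simp: fundamental_cocircuit_def)
  qed
qed

lemma fundamental_cocircuit_le:
  assumes "X \<in> J n B" "\<forall>x\<in>F - {e}. X x = 0"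
  shows "fundamental_cocircuit B F e \<le> X"
proof (rule le_funI)
  fix x
  show "fundamental_cocircuit B F e x \<le> X x"
  proof (cases "insert x (F - {e}) \<in> B")
    case True
    then obtain z where "z \<in> insert x (F - {e})" "0 < X z" using assms(1) unfolding mem_J_iff by blast
    then have "0 < X x" using assms(2) by auto
    then show ?thesis by (simp add: fundamental_cocircuit_def)
  next
    case False
    then show ?thesis by (simp add: fundamental_cocircuit_def)
  qed
qed

lemma fundamental_cocircuit_unique:
  assumes "basis_exchange B" "\<forall>F\<in>B. F \<subseteq> {1..n}" "F \<in> B" "e \<in> F"
    and "C \<in> mingens (J n B)" "\<forall>x\<in>F - {e}. C x = 0"
    and "D \<in> mingens (J n B)" "\<forall>x\<in>F - {e}. D x = 0"
  shows "C = D"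
proof -
  note K_mem = fundamental_cocircuit_mem_J[OF assms(1-4)]
  have "fundamental_cocircuit B F e = C"
    using mingensD(2)[OF assms(5) K_mem] fundamental_cocircuit_le[OF mingensD(1)[OF assms(5)] assms(6)] .
  moreover have "fundamental_cocircuit B F e = D"
    using mingensD(2)[OF assms(7) K_mem] fundamental_cocircuit_le[OF mingensD(1)[OF assms(7)] assms(8)] .
  ultimately show ?thesis by simp
qed

lemma nth_mem_set_take: "k < i \<Longrightarrow> k < length xs \<Longrightarrow> xs ! k \<in> set (take i xs)"
  using nth_mem[of k "take i xs"] by simp

lemma mingens_Jseq:
  assumes "basis_exchange B" "\<forall>F\<in>B. finite F" "set vs \<in> B"
  shows "mingens (Jseq n B vs i) = {D \<in> mingens (J n B). \<forall>x\<in>set (take i vs). D x = 0}"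
  unfolding Jseq_def using mingens_J_contract[OF assms set_take_subset] .

lemma level_iff:
  assumes "basis_exchange B" "\<forall>F\<in>B. finite F" "set vs \<in> B" "D \<in> mingens (J n B)"
  shows "D \<in> level n B vs i \<longleftrightarrow>
    i < length vs \<and> (\<forall>x\<in>set (take i vs). D x = 0) \<and> 0 < D (vs ! i)"
proof (cases "i < length vs")
  case True
  then show ?thesis
    using assms(4) by (auto simp: level_def mingens_Jseq[OF assms(1-3)] take_Suc_conv_app_nth)
next
  case False
  have "\<exists>x\<in>set vs. 0 < D x" using mingensD(1)[OF assms(4)] assms(3) by (auto simp: mem_J_iff)
  then show ?thesis using False by (auto simp: level_def mingens_Jseq[OF assms(1-3)])
qed

lemma level_index_eqI:
  assumes "basis_exchange B" "\<forall>F\<in>B. finite F" "set vs \<in> B" "D \<in> mingens (J n B)"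
    and "i < length vs" "\<forall>x\<in>set (take i vs). D x = 0" "0 < D (vs ! i)"
  shows "level_index n B vs D = i"
  unfolding level_index_def
proof (rule the_equality)
  show "i \<le> length vs \<and> D \<in> level n B vs i" using assms by (simp add: level_iff)
next
  fix j assume "j \<le> length vs \<and> D \<in> level n B vs j"
  then have j: "j < length vs" "\<forall>x\<in>set (take j vs). D x = 0" "0 < D (vs ! j)"
    using level_iff[OF assms(1-4)] by auto
  show "j = i"
  proof (rule linorder_cases)
    assume "i < j"
    then have "vs ! i \<in> set (take j vs)" using assms(5) by (rule nth_mem_set_take)
    then show ?thesis using j(2) assms(7) by simp
  next
    assume "j < i"
    then have "vs ! j \<in> set (take i vs)" using j(1) by (rule nth_mem_set_take)
    then show ?thesis using assms(6) j(3) by simp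
  qed simp
qed

lemma level_index_first_nonzero:
  assumes "basis_exchange B" "\<forall>F\<in>B. finite F" "set vs \<in> B" "D \<in> mingens (J n B)"
  defines "k \<equiv> level_index n B vs D"
  shows "k < length vs" "\<forall>x\<in>set (take k vs). D x = 0" "0 < D (vs ! k)"
proof -
  have "\<exists>x\<in>set vs. 0 < D x" using mingensD(1)[OF assms(4)] assms(3) by (auto simp: mem_J_iff)
  then have "\<exists>i. i < length vs \<and> 0 < D (vs ! i)" by (auto simp: in_set_conv_nth)
  then have "\<exists>i. (i < length vs \<and> 0 < D (vs ! i)) \<and> (\<forall>j<i. \<not> (j < length vs \<and> 0 < D (vs ! j)))"
    by (rule exists_least_iff[THEN iffD1])
  then obtain i where i: "i < length vs" "0 < D (vs ! i)"
    and before: "\<forall>j<i. \<not> (j < length vs \<and> 0 < D (vs ! j))"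
    by blast
  have "D x = 0" if x: "x \<in> set (take i vs)" for x
  proof -
    obtain j where "j < length (take i vs)" "take i vs ! j = x"
      using x unfolding in_set_conv_nth by blast
    then show ?thesis using before by auto
  qed
  then have "\<forall>x\<in>set (take i vs). D x = 0" by blast
  with i have "k = i" unfolding k_def by (intro level_index_eqI[OF assms(1-4)])
  with i \<open>\<forall>x\<in>set (take i vs). D x = 0\<close>
  show "k < length vs" "\<forall>x\<in>set (take k vs). D x = 0" "0 < D (vs ! k)" by simp_all
qed

lemma le_level_index_iff:
  assumes "basis_exchange B" "\<forall>F\<in>B. finite F" "set vs \<in> B" "D \<in> mingens (J n B)"
  shows "k \<le> level_index n B vs D \<longleftrightarrow> (\<forall>x\<in>set (take k vs). D x = 0)"
proof
  note first = level_index_first_nonzero[OF assms]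
  show "\<forall>x\<in>set (take k vs). D x = 0" if "k \<le> level_index n B vs D"
    using set_take_subset_set_take[OF that] first(2) by (meson subsetD)
  show "k \<le> level_index n B vs D" if vanish: "\<forall>x\<in>set (take k vs). D x = 0"
  proof (rule ccontr)
    assume "\<not> k \<le> level_index n B vs D"
    then have "vs ! level_index n B vs D \<in> set (take k vs)"
      using first(1) by (intro nth_mem_set_take) simp_all
    then show False using vanish first(3) by simp
  qed
qed

lemma restrict_eq_image_if_card_eq:
  assumes "\<forall>F\<in>Fs. finite (F \<inter> S) \<and> card (F \<inter> S) = k"
  shows "restrict Fs S = (\<lambda>F. F \<inter> S) ` Fs"
proof -
  have eq: "F \<inter> S = G \<inter> S" if "F \<in> Fs" "G \<in> Fs" "F \<inter> S \<subseteq> G \<inter> S" for F G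
  proof (rule card_subset_eq)
    show "finite (G \<inter> S)" "card (F \<inter> S) = card (G \<inter> S)" using assms that(1,2) by auto
  qed (fact that(3))
  show ?thesis
    unfolding restrict_def using eq by blast
qed

lemma cover_matroid0_eq_image:
  assumes "\<forall>F\<in>B. F \<subseteq> E \<and> finite F \<and> card F = k"
  shows "cover_matroid0 E B N = (\<lambda>F. F - {x. N x \<noteq> 0}) ` cover_matroid B N"
proof -
  have F: "F \<inter> (E - {x. N x \<noteq> 0}) = F - {x. N x \<noteq> 0} \<and>
      finite (F - {x. N x \<noteq> 0}) \<and> card (F - {x. N x \<noteq> 0}) = k - 1"
    if "F \<in> cover_matroid B N" for F
  proof -
    from that assms have F: "F \<in> B" "finite F" "(\<Sum>x\<in>F. N x) = 1"
      by (auto simp: cover_matroid_def)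
    then obtain e where "e \<in> F" "N e = 1" "\<forall>x\<in>F. e \<noteq> x \<longrightarrow> N x = 0"
      using sum_eq_1_iff by blast
    then have "F - {x. N x \<noteq> 0} = F - {e}" by auto
    then show ?thesis using F assms \<open>e \<in> F\<close> by auto
  qed
  then show ?thesis
    unfolding cover_matroid0_def
    by (subst restrict_eq_image_if_card_eq[where k = "k - 1"]) (auto intro!: image_cong)
qed

lemma colon_prec_subset:
  assumes exch: "basis_exchange B" and sub: "\<forall>F\<in>B. F \<subseteq> {1..n}" and vs: "set vs \<in> B"
    and N: "N \<in> mingens (J n B)" and irr: "irrefl (r (level_index n B vs N))"
  defines "A \<equiv> set (take (level_index n B vs N) vs)"
  shows "colon_prec n B vs r N \<subseteq> J n ((\<lambda>F. F - {x. N x \<noteq> 0}) ` cover_matroid (contract B A) N)"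
proof
  fix m assume "m \<in> colon_prec n B vs r N"
  then obtain D where m: "m \<in> monoms n" and D: "D \<in> mingens (J n B)" "prec n B vs r D N"
    and D_le: "D \<le> (\<lambda>x. m x + N x)" by (auto simp: colon_prec_def)
  have fin: "\<forall>F\<in>B. finite F" using sub by (rule bases_finite)
  have sub': "\<forall>F\<in>contract B A. F \<subseteq> {1..n}" using sub by (auto simp: contract_def)
  have "A \<subseteq> set vs" by (simp add: A_def set_take_subset)
  note mingens_A = mingens_J_contract[OF exch fin vs this]
  have "level_index n B vs N \<le> level_index n B vs D" using D(2) by (auto simp: prec_def)
  then have D_A: "D \<in> mingens (J n (contract B A))"
    using le_level_index_iff[OF exch fin vs D(1)] mingens_A D(1) by (simp add: A_def)
  have N_A: "N \<in> mingens (J n (contract B A))"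
    using level_index_first_nonzero(2)[OF exch fin vs N] mingens_A N by (simp add: A_def)
  have "D \<noteq> N" using D(2) irr by (auto simp: prec_def irrefl_def)
  show "m \<in> J n ((\<lambda>F. F - {x. N x \<noteq> 0}) ` cover_matroid (contract B A) N)"
    unfolding mem_J_iff
  proof (intro conjI ballI m)
    fix G assume "G \<in> (\<lambda>F. F - {x. N x \<noteq> 0}) ` cover_matroid (contract B A) N"
    then obtain F where G: "G = F - {x. N x \<noteq> 0}"
      and F: "F \<in> contract B A" "(\<Sum>x\<in>F. N x) = 1" by (auto simp: cover_matroid_def)
    have "finite F" using F(1) bases_finite[OF sub'] by blast
    then obtain e where e: "e \<in> F" "\<forall>x\<in>F. e \<noteq> x \<longrightarrow> N x = 0"
      using F(2) sum_eq_1_iff by blast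
    then have N_F: "\<forall>x\<in>F - {e}. N x = 0" by auto
    show "\<exists>x\<in>G. 0 < m x"
    proof (rule ccontr)
      assume no_m: "\<not> (\<exists>x\<in>G. 0 < m x)"
      have "D x = 0" if x: "x \<in> F - {e}" for x
      proof -
        have "N x = 0" using N_F x by blast
        moreover have "m x = 0" using no_m G x \<open>N x = 0\<close> by auto
        ultimately show ?thesis using le_funD[OF D_le, of x] by simp
      qed
      then have "D = N"
        using fundamental_cocircuit_unique[OF basis_exchange_contract[OF exch] sub' F(1) e(1) D_A _ N_A N_F]
        by blast
      with \<open>D \<noteq> N\<close> show False by contradiction
    qed
  qed
qed

lemma mem_J_contract_singleton:
  assumes "N \<in> J n B" "\<forall>x. N x \<le> 1" "\<forall>F\<in>B. finite F"
    and "m \<in> J n ((\<lambda>F. F - {x. N x \<noteq> 0}) ` cover_matroid B N)"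
  shows "(\<lambda>x. m x + N x)(v := 0) \<in> J n (contract B {v})"
  unfolding mem_J_iff
proof (intro conjI ballI)
  show "(\<lambda>x. m x + N x)(v := 0) \<in> monoms n"
    using assms(1,4) by (auto simp: mem_J_iff monoms_def)
  fix G' assume "G' \<in> contract B {v}"
  then obtain G where G: "G \<in> B" "v \<in> G" "G' = G - {v}" by (auto simp: contract_def)
  show "\<exists>x\<in>G'. 0 < ((\<lambda>x. m x + N x)(v := 0)) x"
  proof (cases "\<exists>z\<in>G'. 0 < N z")
    case True
    then show ?thesis using G(3) by auto
  next
    case False
    then have N_G: "\<forall>z\<in>G. v \<noteq> z \<longrightarrow> N z = 0" using G(3) by auto
    obtain z where "z \<in> G" "0 < N z" using assms(1) G(1) unfolding mem_J_iff by blast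
    with N_G have "0 < N v" by (cases "z = v") auto
    then have "N v = 1" using assms(2) by (simp add: le_antisym)
    have "finite G" using assms(3) G(1) by blast
    then have "(\<Sum>x\<in>G. N x) = 1"
      using sum_eq_1_iff G(2) \<open>N v = 1\<close> N_G by blast
    then have "G - {x. N x \<noteq> 0} \<in> (\<lambda>F. F - {x. N x \<noteq> 0}) ` cover_matroid B N"
      using G(1) by (auto simp: cover_matroid_def)
    then obtain x where "x \<in> G - {x. N x \<noteq> 0}" "0 < m x" using assms(4) unfolding mem_J_iff by blast
    then show ?thesis using G(3) \<open>N v = 1\<close> by (intro bexI[of _ x]) auto
  qed
qed

lemma J_cover_subset_colon_prec:
  assumes exch: "basis_exchange B" and sub: "\<forall>F\<in>B. F \<subseteq> {1..n}" and vs: "set vs \<in> B"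
    and N: "N \<in> mingens (J n B)"
  defines "A \<equiv> set (take (level_index n B vs N) vs)"
  shows "J n ((\<lambda>F. F - {x. N x \<noteq> 0}) ` cover_matroid (contract B A) N) \<subseteq> colon_prec n B vs r N"
proof
  fix m assume m: "m \<in> J n ((\<lambda>F. F - {x. N x \<noteq> 0}) ` cover_matroid (contract B A) N)"
  define i where "i = level_index n B vs N"
  define v where "v = vs ! i"
  have fin: "\<forall>F\<in>B. finite F" using sub by (rule bases_finite)
  note i = level_index_first_nonzero[OF exch fin vs N, folded i_def]
  have N_A: "N \<in> mingens (J n (contract B A))"
    using mingens_J_contract[OF exch fin vs] i(2) N by (simp add: A_def i_def set_take_subset)
  have fin_A: "\<forall>F\<in>contract B A. finite F" using fin by (auto simp: contract_def)
  have N_le: "\<forall>x. N x \<le> 1" using mingens_J_le_1[OF N_A] by blast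
  have "v \<notin> A" using i(2,3) by (auto simp: A_def i_def v_def)
  have "(\<lambda>x. m x + N x)(v := 0) \<in> J n (contract (contract B A) {v})"
    by (rule mem_J_contract_singleton[OF mingensD(1)[OF N_A] N_le fin_A m])
  then have "(\<lambda>x. m x + N x)(v := 0) \<in> J n (contract B (set (take (Suc i) vs)))"
    using i(1) contract_insert[OF \<open>v \<notin> A\<close>]
    by (simp add: A_def i_def v_def take_Suc_conv_app_nth)
  moreover have "J n (contract B (set (take (Suc i) vs))) \<subseteq> monoms n" by (auto simp: mem_J_iff)
  ultimately obtain D where D: "D \<in> mingens (J n (contract B (set (take (Suc i) vs))))"
    and D_le: "D \<le> (\<lambda>x. m x + N x)(v := 0)"
    by (rule ex_mingens_le)
  have D_mingens: "D \<in> mingens (J n B)" and "\<forall>x\<in>set (take (Suc i) vs). D x = 0"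
    using D mingens_J_contract[OF exch fin vs set_take_subset] by simp_all
  then have "Suc i \<le> level_index n B vs D" by (simp add: le_level_index_iff[OF exch fin vs])
  then have "prec n B vs r D N" by (simp add: prec_def i_def)
  moreover have "D \<le> (\<lambda>x. m x + N x)"
  proof (rule le_funI)
    fix x show "D x \<le> m x + N x" using le_funD[OF D_le, of x] by (cases "x = v") auto
  qed
  moreover have "m \<in> monoms n" using m by (simp add: mem_J_iff)
  ultimately show "m \<in> colon_prec n B vs r N"
    using D_mingens by (auto simp: colon_prec_def)
qed

lemma colon_prec_eq_J_cover_matroid0:
  assumes exch: "basis_exchange B" and sub: "\<forall>F\<in>B. F \<subseteq> {1..n}" and card: "\<forall>F\<in>B. card F = c"
    and vs: "set vs \<in> B" and N: "N \<in> mingens (J n B)" and irr: "irrefl (r (level_index n B vs N))"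
  defines "A \<equiv> set (take (level_index n B vs N) vs)"
  shows "colon_prec n B vs r N = J n (cover_matroid0 ({1..n} - A) (contract B A) N)"
proof -
  have "\<forall>F\<in>contract B A. F \<subseteq> {1..n} - A \<and> finite F \<and> card F = c - card A"
    using sub card by (auto simp: contract_def card_Diff_subset finite_subset)
  then have "cover_matroid0 ({1..n} - A) (contract B A) N =
      (\<lambda>F. F - {x. N x \<noteq> 0}) ` cover_matroid (contract B A) N"
    by (rule cover_matroid0_eq_image)
  then show ?thesis
    using colon_prec_subset[where r = r, OF exch sub vs N irr]
      J_cover_subset_colon_prec[where r = r, OF exch sub vs N]
    by (simp add: A_def)
qed

lemma ex_ordered_basis_level_index_0:
  assumes "basis_exchange B" "\<forall>F\<in>B. finite F" "B \<noteq> {}" "N \<in> mingens (J n B)"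
  shows "\<exists>vs. distinct vs \<and> set vs \<in> B \<and> level_index n B vs N = 0"
proof -
  obtain P where P: "P \<in> B" using assms(3) by blast
  then obtain v where v: "v \<in> P" "0 < N v" using mingensD(1)[OF assms(4)] unfolding mem_J_iff by blast
  define vs where "vs = v # sorted_list_of_set (P - {v})"
  have "distinct vs" "set vs = P" using assms(2) P v(1) by (auto simp: vs_def)
  moreover have "level_index n B vs N = 0"
    using level_index_eqI[OF assms(1,2) _ assms(4)] P v(2) \<open>set vs = P\<close> by (simp add: vs_def)
  ultimately show ?thesis using P by blast
qed

theorem theorem4p13:
  fixes n c :: nat and B :: "nat set set"
  assumes "is_matroid {1..n} B" and "\<forall>F\<in>B. card F = c"
  shows "(\<forall>vs r N. distinct vs \<and> set vs \<in> B
            \<and> (\<forall>i\<le>c. strict_linear_order_on (level n B vs i) (r i))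
            \<and> N \<in> mingens (J n B)
            \<and> (\<exists>N'\<in>mingens (J n B). prec n B vs r N' N)
          \<longrightarrow> colon_prec n B vs r N =
              (if level_index n B vs N = 0 then J n (cover_matroid0 {1..n} B N)
               else J n (cover_matroid0 ({1..n} - set (take (level_index n B vs N) vs))
                          (contract B (set (take (level_index n B vs N) vs))) N)))
       \<and> (\<forall>N\<in>mingens (J n B). \<exists>vs. distinct vs \<and> set vs \<in> B \<and> level_index n B vs N = 0)"
proof -
  have exch: "basis_exchange B" using assms(1) by (rule basis_exchange_if_is_matroid)
  have sub: "\<forall>F\<in>B. F \<subseteq> {1..n}" and "B \<noteq> {}" using assms(1) by (auto simp: is_matroid_def)
  have fin: "\<forall>F\<in>B. finite F" using sub by (rule bases_finite)
  show ?thesis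
  proof (intro conjI allI impI ballI)
    fix vs r N
    assume "distinct vs \<and> set vs \<in> B \<and> (\<forall>i\<le>c. strict_linear_order_on (level n B vs i) (r i))
      \<and> N \<in> mingens (J n B) \<and> (\<exists>N'\<in>mingens (J n B). prec n B vs r N' N)"
    then have vs: "distinct vs" "set vs \<in> B" and N: "N \<in> mingens (J n B)"
      and ord: "\<forall>i\<le>c. strict_linear_order_on (level n B vs i) (r i)" by auto
    have "level_index n B vs N < c"
      using level_index_first_nonzero(1)[OF exch fin vs(2) N] assms(2) vs distinct_card by metis
    then have "irrefl (r (level_index n B vs N))" using ord by (simp add: strict_linear_order_on_def)
    with colon_prec_eq_J_cover_matroid0[OF exch sub assms(2) vs(2) N]
    show "colon_prec n B vs r N = (if level_index n B vs N = 0 then J n (cover_matroid0 {1..n} B N)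
        else J n (cover_matroid0 ({1..n} - set (take (level_index n B vs N) vs))
                   (contract B (set (take (level_index n B vs N) vs))) N))"
      by simp
  next
    fix N assume "N \<in> mingens (J n B)"
    then show "\<exists>vs. distinct vs \<and> set vs \<in> B \<and> level_index n B vs N = 0"
      using ex_ordered_basis_level_index_0[OF exch fin \<open>B \<noteq> {}\<close>] by blast
  qed
qed

end
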